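(* Let $\mathbb K$ be an infinite field, $\mathcal N$ a vector space over $\mathbb K$, and $f:(\mathbb K^d)_{\mathrm{nc}}\to\mathcal N_{\mathrm{nc}}$ a nc function. Assume that for each $n$, $f(X_1,\dots,X_d)$ is a polynomial function of the $dn^2$ commuting variables $(X_i)_{jk}$ ($i=1,\dots,d$; $j,k=1,\dots,n$) with values in $\mathcal N^{n\times n}$, and that the degrees of these polynomial functions are bounded uniformly in $n$. Then $f$ is a nc polynomial with coefficients in $\mathcal N$: there exist $L\in\mathbb N$ and $p_w\in\mathcal N$ ($w\in\mathcal G_d$, $|w|\le L$) such that $f(X)=\sum_{|w|\le L}X^wp_w$ for all $n$ and all $X\in(\mathbb K^{n\times n})^d$.
   Context: $n\times n$ matrices over $\mathbb K^d$ are identified with $d$-tuples $X=(X_1,\dots,X_d)$ of $n\times n$ matrices over $\mathbb K$; $(\mathbb K^d)_{\mathrm{nc}}=\coprod_n(\mathbb K^{n\times n})^d$, $\mathcal N_{\mathrm{nc}}=\coprod_n\mathcal N^{n\times n}$. A nc function $f$ satisfies $f((\mathbb K^{n\times n})^d)\subseteq\mathcal N^{n\times n}$, $f(X\oplus Y)=f(X)\oplus f(Y)$ (direct sums taken componentwise, $X\oplus Y=\begin{bmatrix}X&0\\0&Y\end{bmatrix}$), and $f(SXS^{-1})=Sf(X)S^{-1}$ for invertible $S\in\mathbb K^{n\times n}$ (acting componentwise). $\mathcal G_d$ is the free monoid on letters $g_1,\dots,g_d$; for $w=g_{i_1}\cdots g_{i_\ell}$, $|w|=\ell$ and $X^w=X_{i_1}\cdots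 X_{i_\ell}$ ($X^\emptyset=I_n$); $X^wp_w\in\mathcal N^{n\times n}$ is the matrix with entries $(X^w)_{jk}p_w$. *)

theory Defs
  imports Main "HOL.Vector_Spaces"
begin

text \<open>An n x n matrix over a type 'a is a function nat => nat => 'a,
  of which only the entries with indices < n are relevant; a d-tuple of n x n
  matrices over K is a function X :: nat => nat => nat => 'k, X i j k being the
  (j,k) entry of the i-th matrix (i < d).  Canonical representatives are zero
  outside the index range.  A nc function is given by its levels
  f :: nat => (nat => nat => nat => 'k) => (nat => nat => 'v), f n being the
  map on d-tuples of n x n matrices.\<close>

definition tup_carrier :: "nat \<Rightarrow> nat \<Rightarrow> (nat \<Rightarrow> nat \<Rightarrow> nat \<Rightarrow> 'k::zero) set" where
  "tup_carrier d n = {X. \<forall>i j k. (d \<le> i \<or> n \<le> j \<or> n \<le> k) \<longrightarrow> X i j k = 0}"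

definition mat_carrier :: "nat \<Rightarrow> (nat \<Rightarrow> nat \<Rightarrow> 'k::zero) set" where
  "mat_carrier n = {A. \<forall>j k. (n \<le> j \<or> n \<le> k) \<longrightarrow> A j k = 0}"

definition idm :: "nat \<Rightarrow> nat \<Rightarrow> nat \<Rightarrow> 'k::{zero,one}" where
  "idm n j k = (if j < n \<and> k < n \<and> j = k then 1 else 0)"

definition mmul :: "nat \<Rightarrow> (nat \<Rightarrow> nat \<Rightarrow> 'k::comm_semiring_1) \<Rightarrow> (nat \<Rightarrow> nat \<Rightarrow> 'k) \<Rightarrow> nat \<Rightarrow> nat \<Rightarrow> 'k" where
  "mmul n A B j k = (\<Sum>l<n. A j l * B l k)"

definition dsum :: "nat \<Rightarrow> nat \<Rightarrow> (nat \<Rightarrow> nat \<Rightarrow> 'a::zero) \<Rightarrow> (nat \<Rightarrow> nat \<Rightarrow> 'a) \<Rightarrow> nat \<Rightarrow> nat \<Rightarrow> 'a" where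
  "dsum n m A B j k =
     (if j < n \<and> k < n then A j k
      else if n \<le> j \<and> j < n + m \<and> n \<le> k \<and> k < n + m then B (j - n) (k - n)
      else 0)"

definition tup_dsum :: "nat \<Rightarrow> nat \<Rightarrow> nat \<Rightarrow> (nat \<Rightarrow> nat \<Rightarrow> nat \<Rightarrow> 'a::zero) \<Rightarrow> (nat \<Rightarrow> nat \<Rightarrow> nat \<Rightarrow> 'a) \<Rightarrow> nat \<Rightarrow> nat \<Rightarrow> nat \<Rightarrow> 'a" where
  "tup_dsum d n m X Y i = (if i < d then dsum n m (X i) (Y i) else (\<lambda>_ _. 0))"

definition tup_conj :: "nat \<Rightarrow> nat \<Rightarrow> (nat \<Rightarrow> nat \<Rightarrow> 'k::comm_semiring_1) \<Rightarrow> (nat \<Rightarrow> nat \<Rightarrow> nat \<Rightarrow> 'k) \<Rightarrow> (nat \<Rightarrow> nat \<Rightarrow> 'k) \<Rightarrow> nat \<Rightarrow> nat \<Rightarrow> nat \<Rightarrow> 'k" where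
  "tup_conj d n S X T i = (if i < d then mmul n (mmul n S (X i)) T else (\<lambda>_ _. 0))"

definition vconj :: "('k::comm_semiring_1 \<Rightarrow> 'v \<Rightarrow> 'v) \<Rightarrow> nat \<Rightarrow> (nat \<Rightarrow> nat \<Rightarrow> 'k) \<Rightarrow> (nat \<Rightarrow> nat \<Rightarrow> 'v::comm_monoid_add) \<Rightarrow> (nat \<Rightarrow> nat \<Rightarrow> 'k) \<Rightarrow> nat \<Rightarrow> nat \<Rightarrow> 'v" where
  "vconj scale n S F T j k = (\<Sum>l<n. \<Sum>m<n. scale (S j l * T m k) (F l m))"

definition nc_function ::
  "('k::field \<Rightarrow> 'v \<Rightarrow> 'v) \<Rightarrow> nat \<Rightarrow> (nat \<Rightarrow> (nat \<Rightarrow> nat \<Rightarrow> nat \<Rightarrow> 'k) \<Rightarrow> nat \<Rightarrow> nat \<Rightarrow> 'v::comm_monoid_add) \<Rightarrow> bool" where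
  "nc_function scale d f \<longleftrightarrow>
     (\<forall>n m X Y. X \<in> tup_carrier d n \<longrightarrow> Y \<in> tup_carrier d m \<longrightarrow>
        (\<forall>j k. j < n + m \<longrightarrow> k < n + m \<longrightarrow>
           f (n + m) (tup_dsum d n m X Y) j k = dsum n m (f n X) (f m Y) j k)) \<and>
     (\<forall>n X S T. X \<in> tup_carrier d n \<longrightarrow> S \<in> mat_carrier n \<longrightarrow> T \<in> mat_carrier n \<longrightarrow>
        (\<forall>j k. j < n \<longrightarrow> k < n \<longrightarrow> mmul n S T j k = idm n j k \<and> mmul n T S j k = idm n j k) \<longrightarrow>
        (\<forall>j k. j < n \<longrightarrow> k < n \<longrightarrow>
           f n (tup_conj d n S X T) j k = vconj scale n S (f n X) T j k))"

definition vars :: "nat \<Rightarrow> nat \<Rightarrow> (nat \<times> nat \<times> nat) set" where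
  "vars d n = {(i, j, k). i < d \<and> j < n \<and> k < n}"

definition monomials :: "(nat \<times> nat \<times> nat) set \<Rightarrow> nat \<Rightarrow> (nat \<times> nat \<times> nat \<Rightarrow> nat) set" where
  "monomials V D = {\<alpha>. (\<forall>v. v \<notin> V \<longrightarrow> \<alpha> v = 0) \<and> (\<Sum>v\<in>V. \<alpha> v) \<le> D}"

definition poly_fun_deg ::
  "('k::comm_semiring_1 \<Rightarrow> 'v \<Rightarrow> 'v) \<Rightarrow> nat \<Rightarrow> nat \<Rightarrow> nat \<Rightarrow> ((nat \<Rightarrow> nat \<Rightarrow> nat \<Rightarrow> 'k) \<Rightarrow> 'v::comm_monoid_add) \<Rightarrow> bool" where
  "poly_fun_deg scale d n D g \<longleftrightarrow>
     (\<exists>c :: (nat \<times> nat \<times> nat \<Rightarrow> nat) \<Rightarrow> 'v. \<forall>X \<in> tup_carrier d n.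
        g X = (\<Sum>\<alpha>\<in>monomials (vars d n) D.
                 scale (\<Prod>(i, j, k)\<in>vars d n. X i j k ^ \<alpha> (i, j, k)) (c \<alpha>)))"

text \<open>Words in the free monoid on g_1..g_d: lists of letters < d; X^w as matrix product,
  X^[] = I_n.\<close>
definition words :: "nat \<Rightarrow> nat \<Rightarrow> nat list set" where
  "words d L = {w. length w \<le> L \<and> set w \<subseteq> {..<d}}"

definition word_mat :: "nat \<Rightarrow> (nat \<Rightarrow> nat \<Rightarrow> nat \<Rightarrow> 'k::comm_semiring_1) \<Rightarrow> nat list \<Rightarrow> nat \<Rightarrow> nat \<Rightarrow> 'k" where
  "word_mat n X w = foldr (\<lambda>i M. mmul n (X i) M) w (idm n)"

end

theory Submission
  imports Defs
begin

text \<open>A nc function respects intertwinings: X S = S Y implies f(X) S = S f(Y), as one sees by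
  applying f to X \<oplus> Y conjugated by [[I, S], [0, I]].  Let B_t be the (L+2) x (L+2) upper shift
  matrix with t added in the last diagonal entry, so that (t^a)_a is an eigenvector for the
  eigenvalue t.  Intertwining t X with B_t \<otimes> X writes f(t X) as sum_a t^a (block a of
  f(B_t \<otimes> X)); intertwining B_t \<otimes> X with the truncated creation operators on the words of
  length \<le> L identifies the blocks a \<le> L as sum_{|w|=a} X^w p_w, where p_w is read off from f at
  the creation operators.  Hence
  f(t X) = sum_{a \<le> L} t^a sum_{|w|=a} X^w p_w + t^(L+1) G(t),
  and when L bounds the degrees, f(t X) and G(t) are polynomials of degree \<le> L in t.  Comparing
  the coefficients of t^0, ..., t^L over the infinite field and setting t = 1 gives the claim.\<close>

lemma sum_lessThan_add: "(\<Sum>a<n + (m::nat). g a) = (\<Sum>a<n. g a) + (\<Sum>b<m. g (n + b))"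
  by (induction m) (simp_all add: add.assoc)

lemma sum_lessThan_mult: "(\<Sum>k<q * n. g k) = (\<Sum>a<q. \<Sum>r<(n::nat). g (a * n + r))"
proof (induction q)
  case (Suc q)
  have "(\<Sum>k<Suc q * n. g k) = (\<Sum>k<q * n + n. g k)" by (simp add: add.commute)
  also have "\<dots> = (\<Sum>k<q * n. g k) + (\<Sum>r<n. g (q * n + r))" by (rule sum_lessThan_add)
  finally show ?case using Suc by simp
qed simp

lemma less_add_cases:
  assumes "(k::nat) < n + m"
  obtains "k < n" | k' where "k = n + k'" "k' < m"
  using assms by (metis add_diff_inverse_nat add_less_cancel_left)

lemma nat_add_cases:
  obtains "(j::nat) < n" | j' where "j = n + j'" "j' < m" | "n + m \<le> j"
  by (metis less_add_cases not_le)

lemma block_div [simp]: "r < n \<Longrightarrow> (a * n + r) div n = (a::nat)"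
  and block_mod [simp]: "r < n \<Longrightarrow> (a * n + r) mod n = (r::nat)"
  by auto

lemma block_less: "a < q \<Longrightarrow> r < n \<Longrightarrow> a * n + r < q * (n::nat)"
proof -
  assume "a < q" "r < n"
  then have "a * n + r < (a + 1) * n" by simp
  also have "\<dots> \<le> q * n" using \<open>a < q\<close> by (intro mult_le_mono1) simp
  finally show ?thesis .
qed

lemma block_decomp:
  assumes "j < q * (n::nat)"
  obtains a r where "j = a * n + r" "a < q" "r < n"
  using assms by (metis div_mult_mod_eq less_mult_imp_div_less mod_less_divisor mult_0_right neq0_conv not_less0)

lemma if_zero_mult: "(if P then x else 0) * (y::'a::semiring_0) = (if P then x * y else 0)"
  and mult_if_zero: "(x::'a::semiring_0) * (if P then y else 0) = (if P then x * y else 0)"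
  by simp_all

lemma uminus_if_zero: "- (if P then (y::'a::ab_group_add) else 0) = (if P then - y else 0)"
  by simp

lemma sum_if_const_cond: "(\<Sum>y\<in>B. if P then g y else (0::'a::comm_monoid_add)) = (if P then sum g B else 0)"
  by simp

lemma scaled_tup_carrier: "X \<in> tup_carrier d n \<Longrightarrow> (\<lambda>i j k. (t::'k::mult_zero) * X i j k) \<in> tup_carrier d n"
  by (auto simp: tup_carrier_def)

section \<open>Polynomial functions along a ray\<close>

lemma finite_vars: "finite (vars d n)"
proof -
  have "vars d n \<subseteq> {..<d} \<times> {..<n} \<times> {..<n}" by (auto simp: vars_def)
  then show ?thesis by (rule finite_subset) auto
qed

lemma finite_monomials:
  assumes V: "finite V"
  shows "finite (monomials V D)"
proof -
  have "monomials V D \<subseteq> {f. \<forall>x. (x \<in> V \<longrightarrow> f x \<in> {..D}) \<and> (x \<notin> V \<longrightarrow> f x = 0)}"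
  proof
    fix \<alpha> assume a: "\<alpha> \<in> monomials V D"
    have "\<alpha> x \<le> D" if "x \<in> V" for x
      using a V that member_le_sum[of x V \<alpha>] by (auto simp: monomials_def)
    then show "\<alpha> \<in> {f. \<forall>x. (x \<in> V \<longrightarrow> f x \<in> {..D}) \<and> (x \<notin> V \<longrightarrow> f x = 0)}"
      using a by (auto simp: monomials_def)
  qed
  then show ?thesis by (rule finite_subset) (intro finite_set_of_finite_funs V finite_atMost)
qed

lemma monomial_weighted_degree_le:
  assumes "\<alpha> \<in> monomials V D" "\<And>v. e v \<le> (1::nat)"
  shows "(\<Sum>v\<in>V. e v * \<alpha> v) \<le> D"
proof -
  have "(\<Sum>v\<in>V. e v * \<alpha> v) \<le> (\<Sum>v\<in>V. \<alpha> v)"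
    by (intro sum_mono) (use assms(2) in \<open>metis mult_le_mono1 mult_1\<close>)
  then show ?thesis using assms(1) by (auto simp: monomials_def)
qed

context vector_space
begin

lemma scale_if_zero: "scale (if P then a else 0) x = (if P then scale a x else 0)"
  by simp

lemma poly_fun_deg_along_ray:
  assumes g: "poly_fun_deg scale d n D g"
    and Y: "\<And>t. Y t \<in> tup_carrier d n"
    and Y_eq: "\<And>t i j k. Y t i j k = t ^ e i j k * Z i j k"
    and e: "\<And>i j k. e i j k \<le> 1"
  shows "\<exists>a. \<forall>t. g (Y t) = (\<Sum>j\<le>D. scale (t ^ j) (a j))"
proof -
  let ?V = "vars d n"
  let ?mon = "\<lambda>Y \<alpha>. \<Prod>(i, j, k)\<in>?V. Y i j k ^ \<alpha> (i, j, k)"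
  let ?deg = "\<lambda>\<alpha>. \<Sum>v\<in>?V. (case v of (i, j, k) \<Rightarrow> e i j k) * \<alpha> v"
  obtain c where c: "\<And>Y. Y \<in> tup_carrier d n \<Longrightarrow> g Y = (\<Sum>\<alpha>\<in>monomials ?V D. scale (?mon Y \<alpha>) (c \<alpha>))"
    using g unfolding poly_fun_deg_def by blast
  define a where "a j = (\<Sum>\<alpha>\<in>{\<alpha>\<in>monomials ?V D. ?deg \<alpha> = j}. scale (?mon Z \<alpha>) (c \<alpha>))" for j
  have "g (Y t) = (\<Sum>j\<le>D. scale (t ^ j) (a j))" for t
  proof -
    have mon: "?mon (Y t) \<alpha> = t ^ ?deg \<alpha> * ?mon Z \<alpha>" for \<alpha>
      by (simp add: Y_eq case_prod_beta power_mult_distrib prod.distrib power_sum power_mult)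
    have "g (Y t) = (\<Sum>\<alpha>\<in>monomials ?V D. scale (t ^ ?deg \<alpha>) (scale (?mon Z \<alpha>) (c \<alpha>)))"
      by (simp add: c[OF Y] mon)
    also have "\<dots> = (\<Sum>j\<le>D. \<Sum>\<alpha>\<in>{\<alpha>\<in>monomials ?V D. ?deg \<alpha> = j}. scale (t ^ ?deg \<alpha>) (scale (?mon Z \<alpha>) (c \<alpha>)))"
      by (rule sum.group[symmetric])
        (use finite_monomials[OF finite_vars] monomial_weighted_degree_le[where e = "\<lambda>(i, j, k). e i j k"] e
          in \<open>auto split: prod.split\<close>)
    also have "\<dots> = (\<Sum>j\<le>D. scale (t ^ j) (a j))"
      by (simp add: a_def scale_sum_right del: scale_scale)
    finally show ?thesis .
  qed
  then show ?thesis by blast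
qed

text \<open>Induction on the degree: the difference quotient (p(t) - p(s)) / (t - s) at a fresh point s
  vanishes off E \<union> {s}.\<close>
lemma poly_coeffs_zero_if_vanishes_cofinite:
  assumes inf: "infinite (UNIV :: 'a set)"
  shows "finite E \<Longrightarrow> (\<And>t. t \<notin> E \<Longrightarrow> (\<Sum>j\<le>K. scale (t ^ j) (a j)) = 0) \<Longrightarrow> j \<le> K \<Longrightarrow> a j = 0"
proof (induction K arbitrary: a E j)
  case 0
  obtain t where "t \<notin> E" using inf 0(1) by (metis ex_new_if_finite)
  then show ?case using 0 by auto
next
  case (Suc K)
  obtain s where s: "s \<notin> E" using inf Suc(2) by (metis ex_new_if_finite)
  define b where "b i = (\<Sum>j\<in>{Suc i..Suc K}. scale (s ^ (j - Suc i)) (a j))" for i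
  have "(\<Sum>i\<le>K. scale (t ^ i) (b i)) = 0" if t: "t \<notin> insert s E" for t
  proof -
    have "0 = (\<Sum>j\<le>Suc K. scale (t ^ j) (a j)) - (\<Sum>j\<le>Suc K. scale (s ^ j) (a j))"
      using Suc.prems t s by auto
    also have "\<dots> = (\<Sum>j\<le>Suc K. scale (t ^ j - s ^ j) (a j))"
      by (simp add: sum_subtractf scale_left_diff_distrib)
    also have "\<dots> = (\<Sum>j\<le>Suc K. \<Sum>i<j. scale ((t - s) * (t ^ i * s ^ (j - Suc i))) (a j))"
      by (intro sum.cong refl)
        (simp add: power_diff_sumr2 sum_distrib_left scale_sum_left mult.commute mult.left_commute)
    also have "\<dots> = scale (t - s) (\<Sum>j\<le>Suc K. \<Sum>i<j. scale (t ^ i * s ^ (j - Suc i)) (a j))"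
      by (simp only: scale_sum_right scale_scale)
    also have "(\<Sum>j\<le>Suc K. \<Sum>i<j. scale (t ^ i * s ^ (j - Suc i)) (a j))
             = (\<Sum>i<Suc K. \<Sum>j\<in>{Suc i..Suc K}. scale (t ^ i * s ^ (j - Suc i)) (a j))"
      by (rule sum.nested_swap')
    also have "\<dots> = (\<Sum>i\<le>K. scale (t ^ i) (b i))"
      by (simp only: b_def scale_sum_right scale_scale lessThan_Suc_atMost)
    finally show ?thesis using t by simp
  qed
  then have "b K = 0"
    using Suc.IH[of "insert s E"] Suc.prems(1) by blast
  then have top: "a (Suc K) = 0" by (simp add: b_def)
  show ?case
  proof (cases "j = Suc K")
    case False
    then show ?thesis using Suc.IH[of E a j] Suc.prems top by auto
  qed (use top in simp)
qed

lemma poly_low_coeffs_unique: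
  assumes inf: "infinite (UNIV :: 'a set)"
    and eq: "\<And>t. (\<Sum>j\<le>D. scale (t ^ j) (a j))
                 = (\<Sum>j\<le>D. scale (t ^ j) (b j)) + scale (t ^ Suc D) (\<Sum>j\<le>E. scale (t ^ j) (c j))"
    and "j \<le> D"
  shows "a j = b j"
proof -
  define coef where "coef j = (if j \<le> D then a j - b j else - c (j - Suc D))" for j
  have vanish: "(\<Sum>j\<le>D + Suc E. scale (t ^ j) (coef j)) = 0" for t
  proof -
    have low: "(\<Sum>j\<le>D. scale (t ^ j) (coef j)) = (\<Sum>j\<le>D. scale (t ^ j) (a j - b j))"
      by (rule sum.cong) (simp_all add: coef_def)
    have high: "(\<Sum>i\<le>E. scale (t ^ (Suc D + i)) (coef (Suc D + i)))
              = - scale (t ^ Suc D) (\<Sum>j\<le>E. scale (t ^ j) (c j))"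
    proof -
      have "(\<Sum>i\<le>E. scale (t ^ (Suc D + i)) (coef (Suc D + i)))
          = (\<Sum>i\<le>E. scale (t ^ Suc D) (- scale (t ^ i) (c i)))"
        unfolding coef_def power_add by (intro sum.cong) simp_all
      then show ?thesis by (simp only: scale_sum_right[symmetric] sum_negf scale_minus_right)
    qed
    have "{..D + Suc E} = {..<Suc D + Suc E}" by (simp only: add_Suc lessThan_Suc_atMost)
    then have "(\<Sum>j\<le>D + Suc E. scale (t ^ j) (coef j))
        = (\<Sum>j\<le>D. scale (t ^ j) (coef j)) + (\<Sum>i\<le>E. scale (t ^ (Suc D + i)) (coef (Suc D + i)))"
      by (simp only: sum_lessThan_add lessThan_Suc_atMost)
    also have "\<dots> = 0"
      unfolding low high using eq[of t] by (simp add: scale_right_diff_distrib sum_subtractf)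
    finally show ?thesis .
  qed
  have "coef j = 0"
    using poly_coeffs_zero_if_vanishes_cofinite[OF inf finite.emptyI, where K = "D + Suc E" and a = coef] vanish \<open>j \<le> D\<close>
    by (meson trans_le_add1)
  then show ?thesis using \<open>j \<le> D\<close> unfolding coef_def by simp
qed

end

section \<open>Intertwining maps\<close>

definition tup_intertwines ::
  "nat \<Rightarrow> nat \<Rightarrow> nat \<Rightarrow> (nat \<Rightarrow> nat \<Rightarrow> nat \<Rightarrow> 'k::comm_semiring_1) \<Rightarrow> (nat \<Rightarrow> nat \<Rightarrow> 'k)
     \<Rightarrow> (nat \<Rightarrow> nat \<Rightarrow> nat \<Rightarrow> 'k) \<Rightarrow> bool" where
  "tup_intertwines d n m X S Y \<longleftrightarrow>
     (\<forall>i<d. \<forall>j<n. \<forall>l<m. (\<Sum>a<n. X i j a * S a l) = (\<Sum>b<m. S j b * Y i b l))"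

definition shear_mat :: "nat \<Rightarrow> nat \<Rightarrow> (nat \<Rightarrow> nat \<Rightarrow> 'k) \<Rightarrow> 'k \<Rightarrow> nat \<Rightarrow> nat \<Rightarrow> 'k::comm_ring_1" where
  "shear_mat n m S s j k =
     (if j < n + m \<and> k < n + m then (if j = k then 1 else if j < n \<and> n \<le> k then s * S j (k - n) else 0)
      else 0)"

lemma shear_mat_ll: "j < n \<Longrightarrow> k < n \<Longrightarrow> shear_mat n m S s j k = (if j = k then 1 else 0)"
  and shear_mat_lr: "j < n \<Longrightarrow> k < m \<Longrightarrow> shear_mat n m S s j (n + k) = s * S j k"
  and shear_mat_rl: "j < m \<Longrightarrow> k < n \<Longrightarrow> shear_mat n m S s (n + j) k = 0"
  and shear_mat_rr: "j < m \<Longrightarrow> k < m \<Longrightarrow> shear_mat n m S s (n + j) (n + k) = (if j = k then 1 else 0)"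
  and shear_mat_out: "\<not> (j < n + m \<and> k < n + m) \<Longrightarrow> shear_mat n m S s j k = 0"
  by (auto simp: shear_mat_def)

lemmas shear_mat_simps = shear_mat_ll shear_mat_lr shear_mat_rl shear_mat_rr shear_mat_out

lemma shear_mat_carrier: "shear_mat n m S s \<in> mat_carrier (n + m)"
  by (auto simp: mat_carrier_def shear_mat_def)

lemma shear_mat_inverse:
  assumes "j < n + m" "k < n + m"
  shows "mmul (n + m) (shear_mat n m S s) (shear_mat n m S (- s)) j k = idm (n + m) j k"
proof -
  consider "j < n" "k < n" | k' where "j < n" "k = n + k'" "k' < m" | j' where "j = n + j'" "j' < m" "k < n"
    | j' k' where "j = n + j'" "j' < m" "k = n + k'" "k' < m"
    using less_add_cases[OF assms(1)] less_add_cases[OF assms(2)] by metis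
  then show ?thesis
    by cases (simp_all add: mmul_def sum_lessThan_add shear_mat_simps idm_def if_zero_mult mult_if_zero uminus_if_zero)
qed

lemma dsum_ll: "j < n \<Longrightarrow> k < n \<Longrightarrow> dsum n m A B j k = A j k"
  and dsum_lr: "j < n \<Longrightarrow> k < m \<Longrightarrow> dsum n m A B j (n + k) = 0"
  and dsum_rl: "j < m \<Longrightarrow> k < n \<Longrightarrow> dsum n m A B (n + j) k = 0"
  and dsum_rr: "j < m \<Longrightarrow> k < m \<Longrightarrow> dsum n m A B (n + j) (n + k) = B j k"
  and dsum_out: "\<not> (j < n + m \<and> k < n + m) \<Longrightarrow> dsum n m A B j k = 0"
  by (auto simp: dsum_def)

lemmas dsum_simps = dsum_ll dsum_lr dsum_rl dsum_rr dsum_out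

lemma tup_dsum_carrier: "tup_dsum d n m X Y \<in> tup_carrier d (n + m)"
  by (auto simp: tup_carrier_def tup_dsum_def dsum_def)

lemma tup_conj_shear_dsum:
  fixes X Y :: "nat \<Rightarrow> nat \<Rightarrow> nat \<Rightarrow> 'k::comm_ring_1"
  assumes X: "X \<in> tup_carrier d n" and Y: "Y \<in> tup_carrier d m"
    and XSY: "tup_intertwines d n m X S Y"
  shows "tup_conj d (n + m) (shear_mat n m S 1) (tup_dsum d n m X Y) (shear_mat n m S (- 1)) = tup_dsum d n m X Y"
proof (intro ext)
  fix i j k
  show "tup_conj d (n + m) (shear_mat n m S 1) (tup_dsum d n m X Y) (shear_mat n m S (- 1)) i j k
      = tup_dsum d n m X Y i j k"
  proof (cases "i < d")
    case False
    then show ?thesis by (simp add: tup_conj_def tup_dsum_def)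
  next
    case i: True
    let ?Z = "dsum n m (X i) (Y i)"
    have comm: "\<And>j l. j < n \<Longrightarrow> l < m \<Longrightarrow> (\<Sum>a<n. X i j a * S a l) = (\<Sum>b<m. S j b * Y i b l)"
      using XSY i by (simp add: tup_intertwines_def)
    have left: "mmul (n + m) (shear_mat n m S 1) ?Z j k =
       (if j < n \<and> k < n then X i j k
        else if j < n \<and> n \<le> k \<and> k < n + m then (\<Sum>b<m. S j b * Y i b (k - n))
        else if n \<le> j \<and> j < n + m \<and> n \<le> k \<and> k < n + m then Y i (j - n) (k - n) else 0)" for j k
      by (cases rule: nat_add_cases[where j = j and n = n and m = m];
          cases rule: nat_add_cases[where j = k and n = n and m = m])
        (simp_all add: mmul_def sum_lessThan_add shear_mat_simps dsum_simps if_zero_mult mult_if_zero)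
    have "mmul (n + m) (mmul (n + m) (shear_mat n m S 1) ?Z) (shear_mat n m S (- 1)) j k = ?Z j k"
      unfolding mmul_def[of "n + m" "mmul (n + m) (shear_mat n m S 1) ?Z"] left
      by (cases rule: nat_add_cases[where j = j and n = n and m = m];
          cases rule: nat_add_cases[where j = k and n = n and m = m])
        (simp_all add: sum_lessThan_add shear_mat_simps dsum_simps if_zero_mult mult_if_zero comm sum_negf)
    then show ?thesis using i by (simp add: tup_conj_def tup_dsum_def)
  qed
qed

locale nc_fun = vector_space scale
  for scale :: "'k::field \<Rightarrow> 'v::ab_group_add \<Rightarrow> 'v" +
  fixes d :: nat and f :: "nat \<Rightarrow> (nat \<Rightarrow> nat \<Rightarrow> nat \<Rightarrow> 'k) \<Rightarrow> nat \<Rightarrow> nat \<Rightarrow> 'v"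
  assumes nc_function: "nc_function scale d f"
begin

text \<open>The (j, n + l) entry of f(X \<oplus> Y) vanishes; after conjugation by the shear it is
  -(f(X) S)_{jl} + (S f(Y))_{jl}.\<close>
lemma intertwining:
  assumes X: "X \<in> tup_carrier d n" and Y: "Y \<in> tup_carrier d m"
    and XSY: "tup_intertwines d n m X S Y" and j: "j < n" and l: "l < m"
  shows "(\<Sum>a<n. scale (S a l) (f n X j a)) = (\<Sum>b<m. scale (S j b) (f m Y b l))"
proof -
  let ?P = "shear_mat n m S 1" and ?Q = "shear_mat n m S (- 1)" and ?Z = "tup_dsum d n m X Y"
  have dsum: "\<And>a b. a < n + m \<Longrightarrow> b < n + m \<Longrightarrow> f (n + m) ?Z a b = dsum n m (f n X) (f m Y) a b"
    using nc_function X Y unfolding nc_function_def by blast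
  have conj: "f (n + m) (tup_conj d (n + m) ?P ?Z ?Q) a b = vconj scale (n + m) ?P (f (n + m) ?Z) ?Q a b"
    if "a < n + m" "b < n + m" for a b
    by (rule nc_function[unfolded nc_function_def, THEN conjunct2, rule_format])
      (use that tup_dsum_carrier shear_mat_carrier shear_mat_inverse[where s = 1]
        shear_mat_inverse[where s = "- 1", simplified] in auto)
  have "0 = f (n + m) ?Z j (n + l)"
    using dsum[of j "n + l"] j l by (simp add: dsum_lr)
  also have "\<dots> = vconj scale (n + m) ?P (f (n + m) ?Z) ?Q j (n + l)"
    using conj[of j "n + l"] j l by (simp add: tup_conj_shear_dsum[OF X Y XSY])
  also have "\<dots> = - (\<Sum>a<n. scale (S a l) (f n X j a)) + (\<Sum>b<m. scale (S j b) (f m Y b l))"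
    unfolding vconj_def using j l
    by (simp add: dsum sum_lessThan_add shear_mat_simps dsum_simps if_zero_mult mult_if_zero scale_if_zero
        sum_negf sum_if_const_cond)
  finally show ?thesis by (simp add: algebra_simps)
qed

end

section \<open>Kronecker products with a shift matrix\<close>

text \<open>kron_tup d n q B X is the tuple B \<otimes> X_i of (q n) x (q n) matrices and kron_col n q v is
  the (q n) x n matrix v \<otimes> I_n; row index a n + r stands for block a, inner row r.\<close>
definition kron_tup ::
  "nat \<Rightarrow> nat \<Rightarrow> nat \<Rightarrow> (nat \<Rightarrow> nat \<Rightarrow> 'k) \<Rightarrow> (nat \<Rightarrow> nat \<Rightarrow> nat \<Rightarrow> 'k) \<Rightarrow> nat \<Rightarrow> nat \<Rightarrow> nat \<Rightarrow> 'k::comm_semiring_1"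
  where
  "kron_tup d n q B X i j k =
     (if i < d \<and> j < q * n \<and> k < q * n then B (j div n) (k div n) * X i (j mod n) (k mod n) else 0)"

definition kron_col :: "nat \<Rightarrow> nat \<Rightarrow> (nat \<Rightarrow> 'k) \<Rightarrow> nat \<Rightarrow> nat \<Rightarrow> 'k::comm_semiring_1" where
  "kron_col n q v j c = (if j < q * n \<and> j mod n = c then v (j div n) else 0)"

lemma kron_tup_block:
  "i < d \<Longrightarrow> a < q \<Longrightarrow> b < q \<Longrightarrow> r < n \<Longrightarrow> s < n \<Longrightarrow>
   kron_tup d n q B X i (a * n + r) (b * n + s) = B a b * X i r s"
  using block_less[of a q r n] block_less[of b q s n] by (simp add: kron_tup_def)

lemma kron_tup_carrier: "kron_tup d n q B X \<in> tup_carrier d (q * n)"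
  by (auto simp: kron_tup_def tup_carrier_def)

lemma kron_col_block: "a < q \<Longrightarrow> s < n \<Longrightarrow> kron_col n q v (a * n + s) c = (if s = c then v a else 0)"
  using block_less[of a q s n] by (simp add: kron_col_def)

lemma kron_tup_intertwines_eigenvector:
  assumes eig: "\<And>a. a < q \<Longrightarrow> (\<Sum>b<q. B a b * v b) = t * v a"
  shows "tup_intertwines d (q * n) n (kron_tup d n q B X) (kron_col n q v) (\<lambda>i j k. t * X i j k)"
  unfolding tup_intertwines_def
proof (intro allI impI)
  fix i j l assume i: "i < d" and j: "j < q * n" and l: "l < n"
  obtain a r where jj: "j = a * n + r" "a < q" "r < n" using block_decomp[OF j] .
  have "(\<Sum>b<q * n. kron_tup d n q B X i j b * kron_col n q v b l)
      = (\<Sum>b<q. \<Sum>s<n. B a b * X i r s * (if s = l then v b else 0))"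
    unfolding sum_lessThan_mult using jj i by (simp add: kron_tup_block kron_col_block)
  also have "\<dots> = (\<Sum>b<q. B a b * v b) * X i r l"
    using l by (simp add: sum_distrib_left sum_distrib_right mult_ac mult_if_zero)
  also have "\<dots> = (\<Sum>b<n. kron_col n q v j b * (t * X i b l))"
    unfolding jj(1) using jj(2,3) eig by (simp add: kron_col_block if_zero_mult mult_if_zero mult_ac)
  finally show "(\<Sum>b<q * n. kron_tup d n q B X i j b * kron_col n q v b l)
      = (\<Sum>b<n. kron_col n q v j b * (t * X i b l))" .
qed

definition shift_mat :: "nat \<Rightarrow> 'k \<Rightarrow> nat \<Rightarrow> nat \<Rightarrow> 'k::comm_ring_1" where
  "shift_mat L t a b = (if b = Suc a then 1 else 0) + (if a = Suc L \<and> b = Suc L then t else 0)"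

lemma shift_mat_eigenvector: "a < L + 2 \<Longrightarrow> (\<Sum>b<L + 2. shift_mat L t a b * t ^ b) = t * t ^ a"
  by (cases "a = Suc L") (simp_all add: shift_mat_def sum.distrib distrib_right if_zero_mult)

lemma shift_mat_below_corner: "b \<le> L \<Longrightarrow> shift_mat L t a b = (if b = Suc a then 1 else 0)"
  by (simp add: shift_mat_def)

lemma kron_shift_scaling:
  "kron_tup d n (L + 2) (shift_mat L t) X i j k
     = t ^ (if j div n = Suc L \<and> k div n = Suc L then 1 else 0) * kron_tup d n (L + 2) (shift_mat L 1) X i j k"
  by (simp add: kron_tup_def shift_mat_def)

context nc_fun
begin

lemma kron_eigen_entry:
  assumes X: "X \<in> tup_carrier d n" and q: "0 < q"
    and eig: "\<And>a. a < q \<Longrightarrow> (\<Sum>b<q. B a b * v b) = t * v a" and v0: "v 0 = 1"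
    and r: "r < n" and c: "c < n"
  shows "f n (\<lambda>i j k. t * X i j k) r c = (\<Sum>a<q. scale (v a) (f (q * n) (kron_tup d n q B X) r (a * n + c)))"
proof -
  let ?Z = "kron_tup d n q B X" and ?V = "kron_col n q v"
  have rq: "r < q * n" using block_less[of 0 q r n] q r by simp
  have "(\<Sum>a<q * n. scale (?V a c) (f (q * n) ?Z r a)) = (\<Sum>b<n. scale (?V r b) (f n (\<lambda>i j k. t * X i j k) b c))"
    by (rule intertwining[OF kron_tup_carrier scaled_tup_carrier[OF X] kron_tup_intertwines_eigenvector[OF eig] rq c])
  moreover have "(\<Sum>b<n. scale (?V r b) (f n (\<lambda>i j k. t * X i j k) b c)) = f n (\<lambda>i j k. t * X i j k) r c"
    using rq r v0 by (simp add: kron_col_def scale_if_zero)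
  moreover have "(\<Sum>a<q * n. scale (?V a c) (f (q * n) ?Z r a)) = (\<Sum>a<q. scale (v a) (f (q * n) ?Z r (a * n + c)))"
    unfolding sum_lessThan_mult using c by (simp add: kron_col_block scale_if_zero)
  ultimately show ?thesis by simp
qed

end

section \<open>The truncated Fock space\<close>

lemma finite_words: "finite (words d L)"
proof -
  have "words d L = {xs. set xs \<subseteq> {..<d} \<and> length xs \<le> L}" by (auto simp: words_def)
  then show ?thesis using finite_lists_length_le[of "{..<d}" L] by simp
qed

lemma word_mat_Nil: "word_mat n X [] = idm n"
  and word_mat_Cons: "word_mat n X (i # w) = mmul n (X i) (word_mat n X w)"
  by (simp_all add: word_mat_def)

text \<open>With h enumerating the words of length \<le> L, basis vector b of K^N stands for the word h b;
  fock_tup i is left multiplication by the letter i, truncated at length L.\<close>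
definition fock_tup :: "nat \<Rightarrow> nat \<Rightarrow> (nat \<Rightarrow> nat list) \<Rightarrow> nat \<Rightarrow> nat \<Rightarrow> nat \<Rightarrow> nat \<Rightarrow> 'k::comm_semiring_1" where
  "fock_tup d L h N i a b = (if i < d \<and> a < N \<and> b < N \<and> length (h b) < L \<and> h a = i # h b then 1 else 0)"

text \<open>Column b is the vector X^(h b) e_c placed in block k - |h b| of K^((L+2) n).\<close>
definition fock_embed ::
  "nat \<Rightarrow> nat \<Rightarrow> (nat \<Rightarrow> nat \<Rightarrow> nat \<Rightarrow> 'k) \<Rightarrow> (nat \<Rightarrow> nat list) \<Rightarrow> nat \<Rightarrow> nat \<Rightarrow> nat \<Rightarrow> nat \<Rightarrow> nat \<Rightarrow> 'k::comm_semiring_1"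
  where
  "fock_embed n L X h N k c a b =
     (if a < (L + 2) * n \<and> b < N \<and> length (h b) \<le> k \<and> a div n = k - length (h b)
      then word_mat n X (h b) (a mod n) c else 0)"

lemma fock_tup_carrier: "fock_tup d L h N \<in> tup_carrier d N"
  by (auto simp: fock_tup_def tup_carrier_def)

lemma fock_embed_block:
  "a < L + 2 \<Longrightarrow> s < n \<Longrightarrow> b < N \<Longrightarrow> fock_embed n L X h N k c (a * n + s) b =
     (if length (h b) \<le> k \<and> a = k - length (h b) then word_mat n X (h b) s c else 0)"
  using block_less[of a "L + 2" s n] by (simp add: fock_embed_def)

lemma kron_shift_mul_fock_embed:
  assumes k: "k \<le> L" and i: "i < d" and a: "a < L + 2" and r: "r < n" and l: "l < N"
  shows "(\<Sum>b<(L + 2) * n. kron_tup d n (L + 2) (shift_mat L t) X i (a * n + r) b * fock_embed n L X h N k c b l)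
       = (if length (h l) \<le> k \<and> k - length (h l) = Suc a then word_mat n X (i # h l) r c else 0)"
proof -
  let ?w = "h l"
  have "(\<Sum>b<(L + 2) * n. kron_tup d n (L + 2) (shift_mat L t) X i (a * n + r) b * fock_embed n L X h N k c b l)
      = (\<Sum>b<L + 2. \<Sum>s<n. shift_mat L t a b * X i r s *
           (if length ?w \<le> k \<and> b = k - length ?w then word_mat n X ?w s c else 0))"
    unfolding sum_lessThan_mult using a i r l by (simp add: kron_tup_block fock_embed_block)
  also have "\<dots> = (\<Sum>b<L + 2. if length ?w \<le> k \<and> b = k - length ?w
                      then shift_mat L t a b * (\<Sum>s<n. X i r s * word_mat n X ?w s c) else 0)"
    by (intro sum.cong refl) (auto simp: sum_distrib_left mult_ac)
  also have "\<dots> = (if length ?w \<le> k then shift_mat L t a (k - length ?w) * word_mat n X (i # ?w) r c else 0)"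
    using k by (simp add: word_mat_Cons mmul_def)
  also have "\<dots> = (if length ?w \<le> k \<and> k - length ?w = Suc a then word_mat n X (i # ?w) r c else 0)"
    using k by (simp add: shift_mat_below_corner)
  finally show ?thesis .
qed

lemma fock_embed_mul_fock_tup:
  assumes h: "bij_betw h {..<N} (words d L)" and i: "i < d" and a: "a < L + 2" and r: "r < n" and l: "l < N"
  shows "(\<Sum>b<N. fock_embed n L X h N k c (a * n + r) b * fock_tup d L h N i b l)
       = (if length (h l) < L \<and> Suc (length (h l)) \<le> k \<and> a = k - Suc (length (h l))
          then word_mat n X (i # h l) r c else 0)"
proof (cases "length (h l) < L")
  case False
  then show ?thesis by (simp add: fock_tup_def)
next
  case True
  have "i # h l \<in> words d L" using h l True i by (auto simp: words_def bij_betw_def)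
  then obtain b0 where b0: "b0 < N" "h b0 = i # h l" using h unfolding bij_betw_def by (metis imageE lessThan_iff)
  have uniq: "b < N \<Longrightarrow> h b = i # h l \<longleftrightarrow> b = b0" for b
    using b0 h by (auto simp: bij_betw_def inj_on_def)
  have "(\<Sum>b<N. fock_embed n L X h N k c (a * n + r) b * fock_tup d L h N i b l)
      = (\<Sum>b<N. if b = b0 then fock_embed n L X h N k c (a * n + r) b else 0)"
    by (intro sum.cong refl) (use uniq True i l in \<open>auto simp: fock_tup_def\<close>)
  also have "\<dots> = fock_embed n L X h N k c (a * n + r) b0" using b0 by simp
  finally show ?thesis using a r b0 True by (simp add: fock_embed_block)
qed

lemma kron_shift_intertwines_fock:
  assumes h: "bij_betw h {..<N} (words d L)" and k: "k \<le> L"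
  shows "tup_intertwines d ((L + 2) * n) N (kron_tup d n (L + 2) (shift_mat L t) X)
           (fock_embed n L X h N k c) (fock_tup d L h N)"
  unfolding tup_intertwines_def
proof (intro allI impI)
  fix i j l assume i: "i < d" and j: "j < (L + 2) * n" and l: "l < N"
  obtain a r where jj: "j = a * n + r" "a < L + 2" "r < n" using block_decomp[OF j] .
  have "(\<Sum>b<(L + 2) * n. kron_tup d n (L + 2) (shift_mat L t) X i j b * fock_embed n L X h N k c b l)
      = (if length (h l) \<le> k \<and> k - length (h l) = Suc a then word_mat n X (i # h l) r c else 0)"
    unfolding jj(1) by (rule kron_shift_mul_fock_embed[OF k i jj(2,3) l])
  also have "\<dots> = (if length (h l) < L \<and> Suc (length (h l)) \<le> k \<and> a = k - Suc (length (h l))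
                     then word_mat n X (i # h l) r c else 0)"
    using k by auto
  also have "\<dots> = (\<Sum>b<N. fock_embed n L X h N k c j b * fock_tup d L h N i b l)"
    unfolding jj(1) by (rule fock_embed_mul_fock_tup[OF h i jj(2,3) l, symmetric])
  finally show "(\<Sum>b<(L + 2) * n. kron_tup d n (L + 2) (shift_mat L t) X i j b * fock_embed n L X h N k c b l)
      = (\<Sum>b<N. fock_embed n L X h N k c j b * fock_tup d L h N i b l)" .
qed

context nc_fun
begin

definition fock_coeff :: "nat \<Rightarrow> (nat \<Rightarrow> nat list) \<Rightarrow> nat \<Rightarrow> nat list \<Rightarrow> 'v" where
  "fock_coeff L h N w = f N (fock_tup d L h N) (inv_into {..<N} h w) (inv_into {..<N} h [])"

lemma kron_shift_block_entry:
  assumes X: "X \<in> tup_carrier d n" and h: "bij_betw h {..<N} (words d L)" and k: "k \<le> L"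
    and r: "r < n" and c: "c < n"
  shows "f ((L + 2) * n) (kron_tup d n (L + 2) (shift_mat L t) X) r (k * n + c)
       = (\<Sum>w\<in>{w\<in>words d L. length w = k}. scale (word_mat n X w r c) (fock_coeff L h N w))"
proof -
  let ?Z = "kron_tup d n (L + 2) (shift_mat L t) X" and ?R = "fock_embed n L X h N k c"
    and ?U = "fock_tup d L h N"
  define l0 where "l0 = inv_into {..<N} h []"
  have "[] \<in> words d L" by (simp add: words_def)
  then have l0: "l0 < N" "h l0 = []"
    using h unfolding l0_def
    by (auto intro: inv_into_into[of _ h "{..<N}", simplified] bij_betw_inv_into_right simp: bij_betw_def)
  have rr: "r < (L + 2) * n" using block_less[of 0 "L + 2" r n] r by simp
  have "(\<Sum>a<(L + 2) * n. scale (?R a l0) (f ((L + 2) * n) ?Z r a)) = (\<Sum>b<N. scale (?R r b) (f N ?U b l0))"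
    by (rule intertwining[OF kron_tup_carrier fock_tup_carrier kron_shift_intertwines_fock[OF h k] rr l0(1)])
  moreover have "(\<Sum>a<(L + 2) * n. scale (?R a l0) (f ((L + 2) * n) ?Z r a)) = f ((L + 2) * n) ?Z r (k * n + c)"
    unfolding sum_lessThan_mult using l0 c k
    by (simp add: fock_embed_block word_mat_Nil idm_def scale_if_zero sum_if_const_cond)
  moreover have "(\<Sum>b<N. scale (?R r b) (f N ?U b l0))
      = (\<Sum>b<N. (\<lambda>w. if length w = k then scale (word_mat n X w r c) (fock_coeff L h N w) else 0) (h b))"
  proof (rule sum.cong[OF refl])
    fix b assume b: "b \<in> {..<N}"
    have "inv_into {..<N} h (h b) = b" using b h by (simp add: bij_betw_def inv_into_f_f)
    moreover have "?R r b = (if length (h b) = k then word_mat n X (h b) r c else 0)"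
      using fock_embed_block[of 0 L r n b N X h k c] r b by auto
    ultimately show "scale (?R r b) (f N ?U b l0)
        = (\<lambda>w. if length w = k then scale (word_mat n X w r c) (fock_coeff L h N w) else 0) (h b)"
      by (simp add: fock_coeff_def l0_def)
  qed
  moreover have "\<dots> = (\<Sum>w\<in>words d L. if length w = k then scale (word_mat n X w r c) (fock_coeff L h N w) else 0)"
    by (rule sum.reindex_bij_betw[OF h])
  ultimately show ?thesis by (simp add: sum.inter_filter[OF finite_words])
qed

lemma scaled_entry_expansion:
  assumes X: "X \<in> tup_carrier d n" and h: "bij_betw h {..<N} (words d L)" and r: "r < n" and c: "c < n"
  shows "f n (\<lambda>i j k. t * X i j k) r c =
     (\<Sum>a\<le>L. scale (t ^ a) (\<Sum>w\<in>{w\<in>words d L. length w = a}. scale (word_mat n X w r c) (fock_coeff L h N w)))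
     + scale (t ^ Suc L) (f ((L + 2) * n) (kron_tup d n (L + 2) (shift_mat L t) X) r (Suc L * n + c))"
proof -
  let ?F = "\<lambda>a. f ((L + 2) * n) (kron_tup d n (L + 2) (shift_mat L t) X) r (a * n + c)"
  have "f n (\<lambda>i j k. t * X i j k) r c = (\<Sum>a<Suc (Suc L). scale (t ^ a) (?F a))"
    using kron_eigen_entry[OF X _ shift_mat_eigenvector _ r c] by simp
  also have "\<dots> = (\<Sum>a\<le>L. scale (t ^ a) (?F a)) + scale (t ^ Suc L) (?F (Suc L))"
    by (simp only: lessThan_Suc_atMost sum.atMost_Suc)
  also have "(\<Sum>a\<le>L. scale (t ^ a) (?F a))
      = (\<Sum>a\<le>L. scale (t ^ a) (\<Sum>w\<in>{w\<in>words d L. length w = a}. scale (word_mat n X w r c) (fock_coeff L h N w)))"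
  proof (rule sum.cong[OF refl])
    fix a assume "a \<in> {..L}"
    then show "scale (t ^ a) (?F a)
        = scale (t ^ a) (\<Sum>w\<in>{w\<in>words d L. length w = a}. scale (word_mat n X w r c) (fock_coeff L h N w))"
      using kron_shift_block_entry[OF X h _ r c, of a t] by simp
  qed
  finally show ?thesis .
qed

lemma nc_poly_of_poly_entries:
  assumes inf: "infinite (UNIV :: 'k set)"
    and poly: "\<And>n j k. j < n \<Longrightarrow> k < n \<Longrightarrow> poly_fun_deg scale d n D (\<lambda>X. f n X j k)"
  shows "\<exists>p. \<forall>n. \<forall>X \<in> tup_carrier d n. \<forall>j k. j < n \<longrightarrow> k < n \<longrightarrow>
           f n X j k = (\<Sum>w\<in>words d D. scale (word_mat n X w j k) (p w))"
proof -
  obtain h where h: "bij_betw h {..<card (words d D)} (words d D)"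
    using ex_bij_betw_nat_finite[OF finite_words] unfolding atLeast0LessThan by blast
  let ?p = "fock_coeff D h (card (words d D))"
  have "f n X r c = (\<Sum>w\<in>words d D. scale (word_mat n X w r c) (?p w))"
    if X: "X \<in> tup_carrier d n" and r: "r < n" and c: "c < n" for n X r c
  proof -
    define hom where "hom a = (\<Sum>w\<in>{w\<in>words d D. length w = a}. scale (word_mat n X w r c) (?p w))" for a
    let ?M = "(D + 2) * n"
    have rM: "r < ?M" and cM: "Suc D * n + c < ?M"
      using block_less[of 0 "D + 2" r n] block_less[of "Suc D" "D + 2" c n] r c by simp_all
    obtain A where A: "\<And>t. f n (\<lambda>i j k. t * X i j k) r c = (\<Sum>j\<le>D. scale (t ^ j) (A j))"
      using poly_fun_deg_along_ray[OF poly[OF r c], where Y = "\<lambda>t i j k. t * X i j k" and Z = X and e = "\<lambda>_ _ _. 1"]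
        scaled_tup_carrier[OF X] by auto
    have "\<exists>C. \<forall>t. f ?M (kron_tup d n (D + 2) (shift_mat D t) X) r (Suc D * n + c)
                   = (\<Sum>j\<le>D. scale (t ^ j) (C j))"
      by (rule poly_fun_deg_along_ray[OF poly[OF rM cM] kron_tup_carrier kron_shift_scaling]) simp
    then obtain C where C: "\<And>t. f ?M (kron_tup d n (D + 2) (shift_mat D t) X) r (Suc D * n + c)
                              = (\<Sum>j\<le>D. scale (t ^ j) (C j))"
      by blast
    have "A j = hom j" if "j \<le> D" for j
      by (rule poly_low_coeffs_unique[OF inf _ that, where c = C and E = D])
        (use A C scaled_entry_expansion[OF X h r c] in \<open>simp add: hom_def\<close>)
    then have "f n X r c = (\<Sum>a\<le>D. hom a)"
      using A[of 1] by simp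
    also have "\<dots> = (\<Sum>w\<in>words d D. scale (word_mat n X w r c) (?p w))"
      unfolding hom_def by (rule sum.group[OF finite_words]) (auto simp: words_def)
    finally show ?thesis .
  qed
  then show ?thesis by blast
qed

end

theorem theorem6p1:
  fixes scale :: "'k::field \<Rightarrow> 'v::ab_group_add \<Rightarrow> 'v"
    and d :: nat
    and f :: "nat \<Rightarrow> (nat \<Rightarrow> nat \<Rightarrow> nat \<Rightarrow> 'k) \<Rightarrow> nat \<Rightarrow> nat \<Rightarrow> 'v"
  assumes "infinite (UNIV :: 'k set)"
    and "vector_space scale"
    and "nc_function scale d f"
    and "\<exists>D. \<forall>n j k. j < n \<longrightarrow> k < n \<longrightarrow> poly_fun_deg scale d n D (\<lambda>X. f n X j k)"
  shows "\<exists>L (p :: nat list \<Rightarrow> 'v). \<forall>n. \<forall>X \<in> tup_carrier d n. \<forall>j k. j < n \<longrightarrow> k < n \<longrightarrow>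
           f n X j k = (\<Sum>w\<in>words d L. scale (word_mat n X w j k) (p w))"
proof -
  interpret nc_fun scale d f
    by (rule nc_fun.intro) (use assms(2,3) in \<open>simp_all add: nc_fun_axioms_def\<close>)
  obtain D where "\<And>n j k. j < n \<Longrightarrow> k < n \<Longrightarrow> poly_fun_deg scale d n D (\<lambda>X. f n X j k)"
    using assms(4) by blast
  from nc_poly_of_poly_entries[OF assms(1) this] show ?thesis
    by blast
qed

end
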